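(* Fix a $2\times 2$ unitary matrix $C_0=\begin{bmatrix} a & b\\ c & d\end{bmatrix}$ with $abcd\neq 0$ and a frequency $\xi\in\mathbb{R}$, and put $\omega=\arg(\det C_0)/2+\xi$. Suppose $|\cos\omega|>|a|$. Let $\lambda_+$ be the root with $|\lambda_+|>1$ of $\lambda^2-2\frac{\cos\omega}{|a|}\lambda+1=0$. Then for every $j\in\{0,1,2,\dots\}$, \[\lim_{M\to\infty}\mu_M(j)=(1-\lambda_+^{-2})\lambda_+^{-2j},\] where $\mu_M$ is the distribution of the comfortability of the walk with path length $M$ described in the context.
   Context: Notation: $|L\rangle=[1,0]^\top$, $|R\rangle=[0,1]^\top$. For an integer $M\ge1$ and $j\in\mathbb{Z}$ set $C(j)=C_0$ if $j\in\{0,\dots,M-1\}$ and $C(j)=I$ otherwise, and $P(j)=|L\rangle\langle L|C(j)$, $Q(j)=|R\rangle\langle R|C(j)$. The operator $U_M$ acts on uniformly bounded functions $\psi:\mathbb{Z}\to\mathbb{C}^2$ by $(U_M\psi)(j)=P(j+1)\psi(j+1)+Q(j-1)\psi(j-1)$. The initial state is $\psi_0(j)=e^{i\xi j}|R\rangle$ for $j\le 0$ and $\psi_0(j)=0$ for $j>0$, and $\psi_t=U_M^t\psi_0$. The state $e^{i\xi t}\psi_t$ converges pointwise to a stationary state as $t\to\infty$, and the distribution of the comfortability is $\mu_M(j)=\lim_{t\to\infty}\frac{\|\psi_t(j)\|^2}{\sum_{k=0}^{M-1}\|\psi_t(k)\|^2}$ for $j\in\{0,\dots,M-1\}$ (for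 fixed $j$ this is defined once $M>j$). *)

theory Defs
  imports "HOL-Analysis.Analysis"
begin

text \<open>Vectors in C^2 are pairs (L-component, R-component).
  The 2x2 coin C0 = [[a,b],[c,d]] is given by its four entries.\<close>

definition unitary2 :: "complex \<Rightarrow> complex \<Rightarrow> complex \<Rightarrow> complex \<Rightarrow> bool" where
  "unitary2 a b c d \<longleftrightarrow>
     cnj a * a + cnj c * c = 1 \<and> cnj a * b + cnj c * d = 0 \<and>
     cnj b * a + cnj d * c = 0 \<and> cnj b * b + cnj d * d = 1"

definition coin_apply ::
  "nat \<Rightarrow> complex \<Rightarrow> complex \<Rightarrow> complex \<Rightarrow> complex \<Rightarrow> int \<Rightarrow> complex \<times> complex \<Rightarrow> complex \<times> complex" where
  "coin_apply M a b c d j v =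
     (if 0 \<le> j \<and> j < int M then (a * fst v + b * snd v, c * fst v + d * snd v) else v)"

text \<open>(U_M psi)(j) = P(j+1) psi(j+1) + Q(j-1) psi(j-1), with
  P(j) = |L><L| C(j), Q(j) = |R><R| C(j).\<close>
definition U_walk ::
  "nat \<Rightarrow> complex \<Rightarrow> complex \<Rightarrow> complex \<Rightarrow> complex \<Rightarrow> (int \<Rightarrow> complex \<times> complex) \<Rightarrow> int \<Rightarrow> complex \<times> complex" where
  "U_walk M a b c d psi j =
     (fst (coin_apply M a b c d (j + 1) (psi (j + 1))),
      snd (coin_apply M a b c d (j - 1) (psi (j - 1))))"

definition psi0 :: "real \<Rightarrow> int \<Rightarrow> complex \<times> complex" where
  "psi0 \<xi> j = (if j \<le> 0 then (0, exp (\<i> * complex_of_real (\<xi> * of_int j))) else (0, 0))"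

definition psi_t ::
  "nat \<Rightarrow> complex \<Rightarrow> complex \<Rightarrow> complex \<Rightarrow> complex \<Rightarrow> real \<Rightarrow> nat \<Rightarrow> int \<Rightarrow> complex \<times> complex" where
  "psi_t M a b c d \<xi> t = (U_walk M a b c d ^^ t) (psi0 \<xi>)"

definition sqnorm2 :: "complex \<times> complex \<Rightarrow> real" where
  "sqnorm2 v = (cmod (fst v))\<^sup>2 + (cmod (snd v))\<^sup>2"

text \<open>The ratio whose t -> infinity limit is mu_M(j).\<close>
definition comf_ratio ::
  "nat \<Rightarrow> complex \<Rightarrow> complex \<Rightarrow> complex \<Rightarrow> complex \<Rightarrow> real \<Rightarrow> nat \<Rightarrow> nat \<Rightarrow> real" where
  "comf_ratio M a b c d \<xi> j t =
     sqnorm2 (psi_t M a b c d \<xi> t (int j)) /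
     (\<Sum>k<M. sqnorm2 (psi_t M a b c d \<xi> t (int k)))"

end

theory Submission
  imports Defs
begin

text \<open>
  Multiplied by \<open>e\<^sup>i\<^sup>\<xi>\<^sup>t\<close>, the walk on the sites \<open>0, \<dots>, M - 1\<close> becomes an affine recursion:
  a fixed linear map, the walk with coin \<open>e\<^sup>i\<^sup>\<xi> C\<^sub>0\<close> and absorbing ends, plus a constant
  source at site 0 fed by the incoming plane wave. By unitarity the linear part loses exactly
  the energy that leaks through the two ends, and since mass reaches the left end within \<open>2 M\<close>
  steps, a fixed fraction leaks in that time; so the energy of the linear part tends to 0 and the
  rephased walk converges to the unique stationary state.

  The stationary state is a combination of the two geometric eigenmodes \<open>\<mu>\<^sup>k (p\<^sub>\<mu>, 1)\<close> of the
  transfer matrix, where \<open>\<mu> = s \<lambda>\<^sub>+\<close> and \<open>\<mu> = s / \<lambda>\<^sub>+\<close> with \<open>|s| = 1\<close>. The weight of the growing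
  mode relative to the decaying one is of order \<open>\<lambda>\<^sub>+\<^sup>-\<^sup>2\<^sup>M\<close>, so as \<open>M \<rightarrow> \<infinity>\<close> the normalised profile
  tends to that of the decaying mode, whose squared norms are proportional to \<open>\<lambda>\<^sub>+\<^sup>-\<^sup>2\<^sup>j\<close>.
\<close>

section \<open>Unitary coins\<close>

lemma unitary2_norm_preserving:
  assumes "unitary2 a b c d"
  shows "(cmod (a * x + b * y))\<^sup>2 + (cmod (c * x + d * y))\<^sup>2 = (cmod x)\<^sup>2 + (cmod y)\<^sup>2"
proof -
  have "complex_of_real ((cmod (a * x + b * y))\<^sup>2 + (cmod (c * x + d * y))\<^sup>2)
      = (a * x + b * y) * cnj (a * x + b * y) + (c * x + d * y) * cnj (c * x + d * y)"
    by (simp only: of_real_add complex_norm_square)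
  also have "\<dots> = x * cnj x * (cnj a * a + cnj c * c) + y * cnj y * (cnj b * b + cnj d * d)
        + x * cnj y * (cnj b * a + cnj d * c) + y * cnj x * (cnj a * b + cnj c * d)"
    by (simp add: algebra_simps)
  also have "\<dots> = x * cnj x + y * cnj y"
    using assms by (simp add: unitary2_def)
  also have "\<dots> = complex_of_real ((cmod x)\<^sup>2 + (cmod y)\<^sup>2)"
    by (simp only: of_real_add complex_norm_square)
  finally show ?thesis
    by (simp only: of_real_eq_iff)
qed

lemma unitary2_norm_le_1:
  assumes "unitary2 a b c d"
  shows "cmod a \<le> 1" "cmod b \<le> 1" "cmod c \<le> 1" "cmod d \<le> 1"
proof -
  have "(cmod a)\<^sup>2 + (cmod c)\<^sup>2 = 1" "(cmod b)\<^sup>2 + (cmod d)\<^sup>2 = 1"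
    using unitary2_norm_preserving[OF assms, of 1 0] unitary2_norm_preserving[OF assms, of 0 1]
    by simp_all
  then show "cmod a \<le> 1" "cmod b \<le> 1" "cmod c \<le> 1" "cmod d \<le> 1"
    by (smt (verit) norm_ge_zero power2_le_imp_le zero_le_power2 one_power2)+
qed

lemma unitary2_cofactors:
  assumes "unitary2 a b c d"
  shows "d = (a * d - b * c) * cnj a" "c = - (a * d - b * c) * cnj b"
proof -
  have "d - (a * d - b * c) * cnj a = d * (1 - cnj a * a) + c * (cnj a * b)"
    by (simp add: algebra_simps)
  also have "\<dots> = c * (cnj a * b + cnj c * d)"
    using assms by (simp add: unitary2_def algebra_simps flip: eq_diff_eq)
  also have "\<dots> = 0"
    using assms by (simp add: unitary2_def)
  finally show "d = (a * d - b * c) * cnj a"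
    by simp
  have "c + (a * d - b * c) * cnj b = c * (1 - cnj b * b) + d * (cnj b * a)"
    by (simp add: algebra_simps)
  also have "\<dots> = d * (cnj b * a + cnj d * c)"
    using assms by (simp add: unitary2_def algebra_simps flip: eq_diff_eq)
  also have "\<dots> = 0"
    using assms by (simp add: unitary2_def)
  finally show "c = - (a * d - b * c) * cnj b"
    by (simp only: mult_minus_left eq_neg_iff_add_eq_0)
qed

lemma unitary2_norm_det:
  assumes "unitary2 a b c d"
  shows "cmod (a * d - b * c) = 1"
proof -
  define \<Delta> where "\<Delta> = a * d - b * c"
  have d: "d = \<Delta> * cnj a" and c: "c = - \<Delta> * cnj b"
    using unitary2_cofactors[OF assms] unfolding \<Delta>_def by simp_all
  have u: "cnj a * a + cnj c * c = 1" "cnj a * b + cnj c * d = 0" "cnj b * b + cnj d * d = 1"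
    using assms by (simp_all add: unitary2_def)
  have "\<Delta> \<noteq> 0"
  proof
    assume "\<Delta> = 0"
    then have "cnj a * a = 1" "cnj b * b = 1" "cnj a * b = 0"
      using u by (simp_all add: c d)
    then show False
      by (metis mult_eq_0_iff complex_cnj_zero_iff zero_neq_one)
  qed
  have "\<Delta> = \<Delta> * (cnj a * a + cnj b * b)"
    by (subst (1) \<Delta>_def) (simp add: c d algebra_simps)
  with \<open>\<Delta> \<noteq> 0\<close> have ab: "cnj a * a + cnj b * b = 1"
    by (metis mult_cancel_left1)
  have "(1 + \<Delta> * cnj \<Delta>) * (cnj a * a + cnj b * b)
      = (cnj a * a + cnj c * c) + (cnj b * b + cnj d * d)"
    by (simp add: c d algebra_simps)
  with u(1,3) ab have "\<Delta> * cnj \<Delta> = 1"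
    by simp
  then have "complex_of_real ((cmod \<Delta>)\<^sup>2) = 1"
    by (simp only: complex_norm_square)
  then have "(cmod \<Delta>)\<^sup>2 = 1"
    by (simp only: of_real_eq_1_iff)
  then show ?thesis
    unfolding \<Delta>_def[symmetric] by (simp add: abs_square_eq_1)
qed

section \<open>Dissipation on a finite segment\<close>

text \<open>The walk on the sites \<open>0, \<dots>, M - 1\<close> with nothing flowing in: amplitude leaving through
  either end is lost.\<close>

definition segment_step ::
  "nat \<Rightarrow> complex \<Rightarrow> complex \<Rightarrow> complex \<Rightarrow> complex \<Rightarrow> (nat \<Rightarrow> complex \<times> complex) \<Rightarrow> nat \<Rightarrow> complex \<times> complex"
  where "segment_step M a b c d u k =
     (if Suc k < M then a * fst (u (Suc k)) + b * snd (u (Suc k)) else 0,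
      if k = 0 then 0 else c * fst (u (k - 1)) + d * snd (u (k - 1)))"

definition segment_walk ::
  "nat \<Rightarrow> complex \<Rightarrow> complex \<Rightarrow> complex \<Rightarrow> complex \<Rightarrow> (nat \<Rightarrow> nat \<Rightarrow> complex \<times> complex) \<Rightarrow> bool"
  where "segment_walk M a b c d w \<longleftrightarrow> (\<forall>t k. k < M \<longrightarrow> w (Suc t) k = segment_step M a b c d (w t) k)"

definition segment_energy :: "nat \<Rightarrow> (nat \<Rightarrow> complex \<times> complex) \<Rightarrow> real"
  where "segment_energy M u = (\<Sum>k<M. sqnorm2 (u k))"

definition segment_leak ::
  "nat \<Rightarrow> complex \<Rightarrow> complex \<Rightarrow> complex \<Rightarrow> complex \<Rightarrow> (nat \<Rightarrow> complex \<times> complex) \<Rightarrow> real"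
  where "segment_leak M a b c d u =
     (cmod (a * fst (u 0) + b * snd (u 0)))\<^sup>2 + (cmod (c * fst (u (M - 1)) + d * snd (u (M - 1))))\<^sup>2"

lemma sqnorm2_eq_norm_square: "sqnorm2 v = (norm v)\<^sup>2"
  by (cases v) (simp add: sqnorm2_def norm_Pair)

lemma sqnorm2_nonneg: "0 \<le> sqnorm2 v"
  by (simp add: sqnorm2_def)

lemma segment_energy_nonneg: "0 \<le> segment_energy M u"
  by (simp add: segment_energy_def sum_nonneg sqnorm2_nonneg)

lemma sqnorm2_le_segment_energy: "k < M \<Longrightarrow> sqnorm2 (u k) \<le> segment_energy M u"
  unfolding segment_energy_def by (rule member_le_sum) (auto simp: sqnorm2_nonneg)

lemma segment_leak_nonneg: "0 \<le> segment_leak M a b c d u"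
  by (simp add: segment_leak_def)

lemma segment_energy_step:
  assumes "unitary2 a b c d" and "0 < M"
  shows "segment_energy M (segment_step M a b c d u) = segment_energy M u - segment_leak M a b c d u"
proof -
  obtain m where M: "M = Suc m"
    using \<open>0 < M\<close> gr0_implies_Suc by blast
  define A where "A k = (cmod (a * fst (u k) + b * snd (u k)))\<^sup>2" for k
  define C where "C k = (cmod (c * fst (u k) + d * snd (u k)))\<^sup>2" for k
  have "segment_energy M u = (\<Sum>k<Suc m. A k + C k)"
    using unitary2_norm_preserving[OF assms(1)]
    by (simp add: segment_energy_def sqnorm2_def A_def C_def M)
  also have "\<dots> = (\<Sum>k<Suc m. A k) + (\<Sum>k<Suc m. C k)"
    by (rule sum.distrib)
  also have "\<dots> = A 0 + C m + ((\<Sum>k<m. A (Suc k)) + (\<Sum>k<m. C k))"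
    by (simp add: sum.lessThan_Suc_shift[of A] del: sum.lessThan_Suc) (simp add: add.commute)
  also have "(\<Sum>k<m. A (Suc k)) = (\<Sum>k<Suc m. (cmod (fst (segment_step M a b c d u k)))\<^sup>2)"
    by (simp add: segment_step_def A_def M)
  also have "(\<Sum>k<m. C k) = (\<Sum>k<Suc m. (cmod (snd (segment_step M a b c d u k)))\<^sup>2)"
    by (simp add: segment_step_def C_def sum.lessThan_Suc_shift del: sum.lessThan_Suc)
  also have "(\<Sum>k<Suc m. (cmod (fst (segment_step M a b c d u k)))\<^sup>2)
      + (\<Sum>k<Suc m. (cmod (snd (segment_step M a b c d u k)))\<^sup>2)
      = segment_energy M (segment_step M a b c d u)"
    by (simp add: segment_energy_def sqnorm2_def M sum.distrib del: sum.lessThan_Suc)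
  finally show ?thesis
    by (simp add: segment_leak_def A_def C_def M)
qed

lemma segment_walk_shift: "segment_walk M a b c d w \<Longrightarrow> segment_walk M a b c d (\<lambda>t. w (t + N))"
  by (simp add: segment_walk_def)

context
  fixes M :: nat and a b c d :: complex and w :: "nat \<Rightarrow> nat \<Rightarrow> complex \<times> complex"
  assumes unitary: "unitary2 a b c d" and walk: "segment_walk M a b c d w"
begin

lemma segment_walk_energy_Suc:
  assumes "0 < M"
  shows "segment_energy M (w (Suc t)) = segment_energy M (w t) - segment_leak M a b c d (w t)"
proof -
  have "segment_energy M (w (Suc t)) = segment_energy M (segment_step M a b c d (w t))"
    unfolding segment_energy_def using walk by (intro sum.cong) (auto simp: segment_walk_def)
  then show ?thesis
    using segment_energy_step[OF unitary assms] by simp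
qed

lemma segment_walk_energy_telescope:
  assumes "0 < M"
  shows "segment_energy M (w n) = segment_energy M (w 0) - (\<Sum>i<n. segment_leak M a b c d (w i))"
  by (induction n) (simp_all add: segment_walk_energy_Suc[OF assms])

lemma segment_walk_energy_decseq: "decseq (\<lambda>t. segment_energy M (w t))"
proof (cases "M = 0")
  case True
  then show ?thesis
    by (simp add: segment_energy_def decseq_def)
next
  case False
  then show ?thesis
    by (intro decseq_SucI) (simp add: segment_walk_energy_Suc segment_leak_nonneg)
qed

lemma segment_walk_site_bound:
  assumes "a \<noteq> 0" and "Suc k < M"
  shows "sqnorm2 (w (Suc n) (Suc k)) \<le> 3 / (cmod a)\<^sup>2 * (sqnorm2 (w n k) + sqnorm2 (w (Suc (Suc n)) k))"
proof -
  define \<alpha> where "\<alpha> = (cmod a)\<^sup>2"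
  have \<alpha>: "0 < \<alpha>" "\<alpha> \<le> 1"
    using assms(1) unitary2_norm_le_1(1)[OF unitary] by (simp_all add: \<alpha>_def abs_square_le_1)
  define L R L' where "L = fst (w (Suc n) (Suc k))" and "R = snd (w (Suc n) (Suc k))"
    and "L' = fst (w (Suc (Suc n)) k)"
  have R: "R = c * fst (w n k) + d * snd (w n k)" and L': "L' = a * L + b * R"
    using walk assms(2) by (simp_all add: segment_walk_def segment_step_def L_def R_def L'_def)
  have "(cmod R)\<^sup>2 \<le> (cmod (a * fst (w n k) + b * snd (w n k)))\<^sup>2 + (cmod R)\<^sup>2"
    by simp
  also have "\<dots> = sqnorm2 (w n k)"
    unfolding R sqnorm2_def by (rule unitary2_norm_preserving[OF unitary])
  finally have R_le: "(cmod R)\<^sup>2 \<le> sqnorm2 (w n k)" .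
  have "cmod (a * L) \<le> cmod L' + cmod b * cmod R"
    using norm_triangle_ineq4[of L' "b * R"] by (simp add: L' norm_mult)
  also have "\<dots> \<le> cmod L' + cmod R"
    using unitary2_norm_le_1(2)[OF unitary] by (simp add: mult_left_le_one_le)
  finally have "\<alpha> * (cmod L)\<^sup>2 \<le> (cmod L' + cmod R)\<^sup>2"
    by (simp add: \<alpha>_def norm_mult power_mult_distrib flip: power_mult_distrib power_mono)
  also have "\<dots> \<le> 2 * ((cmod L')\<^sup>2 + (cmod R)\<^sup>2)"
    using zero_le_power2[of "cmod L' - cmod R"] by (simp add: power2_eq_square algebra_simps)
  also have "\<dots> \<le> 2 * (sqnorm2 (w (Suc (Suc n)) k) + sqnorm2 (w n k))"
    using R_le zero_le_power2[of "cmod (snd (w (Suc (Suc n)) k))"]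
    unfolding L'_def sqnorm2_def by (smt (verit))
  finally have L_le: "\<alpha> * (cmod L)\<^sup>2 \<le> 2 * (sqnorm2 (w (Suc (Suc n)) k) + sqnorm2 (w n k))" .
  have "\<alpha> * (cmod R)\<^sup>2 \<le> sqnorm2 (w n k)"
    using R_le \<alpha> by (meson mult_left_le_one_le order_trans zero_le_power2 less_imp_le)
  moreover have "sqnorm2 (w (Suc n) (Suc k)) = (cmod L)\<^sup>2 + (cmod R)\<^sup>2"
    by (simp add: sqnorm2_def L_def R_def)
  ultimately have "\<alpha> * sqnorm2 (w (Suc n) (Suc k)) \<le> 3 * (sqnorm2 (w n k) + sqnorm2 (w (Suc (Suc n)) k))"
    using L_le sqnorm2_nonneg[of "w (Suc (Suc n)) k"] by (simp add: distrib_left)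
  then show ?thesis
    using \<alpha> by (simp add: \<alpha>_def field_simps)
qed

lemma segment_walk_light_cone_bound:
  assumes "a \<noteq> 0" and "k < M" and "k < n" and "n + k < 2 * M"
  shows "sqnorm2 (w n k) \<le> (6 / (cmod a)\<^sup>2) ^ k * (\<Sum>i\<in>{1..<2 * M}. sqnorm2 (w i 0))"
  using assms(2-4)
proof (induction k arbitrary: n)
  case 0
  then show ?case
    by (simp, intro member_le_sum) (auto simp: sqnorm2_nonneg)
next
  case (Suc k)
  define S where "S = (\<Sum>i\<in>{1..<2 * M}. sqnorm2 (w i 0))"
  obtain n' where n: "n = Suc n'"
    using Suc.prems(2) by (cases n) auto
  have "sqnorm2 (w n (Suc k)) \<le> 3 / (cmod a)\<^sup>2 * (sqnorm2 (w n' k) + sqnorm2 (w (Suc (Suc n')) k))"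
    unfolding n using segment_walk_site_bound[OF assms(1) Suc.prems(1)] .
  also have "\<dots> \<le> 3 / (cmod a)\<^sup>2 * ((6 / (cmod a)\<^sup>2) ^ k * S + (6 / (cmod a)\<^sup>2) ^ k * S)"
  proof (intro mult_left_mono add_mono)
    show "sqnorm2 (w n' k) \<le> (6 / (cmod a)\<^sup>2) ^ k * S"
      using Suc.prems by (unfold S_def, intro Suc.IH) (simp_all add: n)
    show "sqnorm2 (w (Suc (Suc n')) k) \<le> (6 / (cmod a)\<^sup>2) ^ k * S"
      using Suc.prems by (unfold S_def, intro Suc.IH) (simp_all add: n)
  qed simp
  also have "\<dots> = (6 / (cmod a)\<^sup>2) ^ Suc k * S"
    by (simp add: field_simps)
  finally show ?case
    unfolding S_def .
qed

lemma segment_walk_left_end_mass_le: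
  assumes "0 < M"
  shows "(cmod a)\<^sup>2 * (\<Sum>i\<in>{1..<2 * M}. sqnorm2 (w i 0))
    \<le> segment_energy M (w 0) - segment_energy M (w (2 * M))"
proof -
  have "(cmod a)\<^sup>2 * (\<Sum>i\<in>{1..<2 * M}. sqnorm2 (w i 0)) \<le> (\<Sum>i\<in>{1..<2 * M}. segment_leak M a b c d (w i))"
    unfolding sum_distrib_left
  proof (intro sum_mono)
    fix i assume "i \<in> {1..<2 * M}"
    then obtain i' where i: "i = Suc i'"
      using not0_implies_Suc by force
    have "w i 0 = segment_step M a b c d (w i') 0"
      using walk assms unfolding i segment_walk_def by blast
    then have "snd (w i 0) = 0"
      by (simp add: segment_step_def)
    then show "(cmod a)\<^sup>2 * sqnorm2 (w i 0) \<le> segment_leak M a b c d (w i)"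
      by (simp add: segment_leak_def sqnorm2_def norm_mult power_mult_distrib)
  qed
  also have "\<dots> \<le> (\<Sum>i<2 * M. segment_leak M a b c d (w i))"
    by (intro sum_mono2) (auto simp: segment_leak_nonneg)
  also have "\<dots> = segment_energy M (w 0) - segment_energy M (w (2 * M))"
    using segment_walk_energy_telescope[OF assms, of "2 * M"] by simp
  finally show ?thesis .
qed

text \<open>By the light-cone bound, the mass present at time \<open>M\<close> is controlled by the mass at site 0
  at times \<open>1, \<dots>, 2 M - 1\<close>, and all of that leaks out through the left end.\<close>

lemma segment_walk_energy_contraction:
  assumes "a \<noteq> 0" and "0 < M"
  defines "C \<equiv> (\<Sum>k<M. (6 / (cmod a)\<^sup>2) ^ k) / (cmod a)\<^sup>2"
  shows "segment_energy M (w (2 * M)) \<le> C / (1 + C) * segment_energy M (w 0)"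
proof -
  define \<alpha> where "\<alpha> = (cmod a)\<^sup>2"
  define G where "G = (\<Sum>k<M. (6 / \<alpha>) ^ k)"
  define S where "S = (\<Sum>i\<in>{1..<2 * M}. sqnorm2 (w i 0))"
  have \<alpha>: "0 < \<alpha>"
    using assms(1) by (simp add: \<alpha>_def)
  have G: "0 \<le> G"
    unfolding G_def using \<alpha> by (intro sum_nonneg) simp
  have "segment_energy M (w (2 * M)) \<le> segment_energy M (w M)"
    using segment_walk_energy_decseq by (simp add: decseq_def)
  also have "segment_energy M (w M) \<le> (\<Sum>k<M. (6 / \<alpha>) ^ k * S)"
    unfolding segment_energy_def \<alpha>_def S_def
    by (intro sum_mono segment_walk_light_cone_bound[OF assms(1)]) auto
  also have "\<dots> = G * S"
    by (simp add: G_def sum_distrib_right)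
  finally have energy_le: "segment_energy M (w (2 * M)) \<le> G * S" .
  have leak_bound: "\<alpha> * S \<le> segment_energy M (w 0) - segment_energy M (w (2 * M))"
    unfolding \<alpha>_def S_def by (rule segment_walk_left_end_mass_le[OF assms(2)])
  have C: "C = G / \<alpha>"
    by (simp add: C_def G_def \<alpha>_def)
  have "G * S = C * (\<alpha> * S)"
    using \<alpha> by (simp add: C)
  also have "\<dots> \<le> C * (segment_energy M (w 0) - segment_energy M (w (2 * M)))"
    using G \<alpha> leak_bound by (intro mult_left_mono) (simp_all add: C)
  finally have "segment_energy M (w (2 * M)) * (1 + C) \<le> C * segment_energy M (w 0)"
    using energy_le by (simp add: algebra_simps)
  moreover have "0 \<le> C"
    using G \<alpha> by (simp add: C)
  ultimately show ?thesis
    by (simp add: pos_le_divide_eq)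
qed

end

lemma segment_walk_energy_tendsto_0:
  assumes "unitary2 a b c d" and "a \<noteq> 0" and "segment_walk M a b c d w"
  shows "(\<lambda>t. segment_energy M (w t)) \<longlonglongrightarrow> 0"
proof (cases "M = 0")
  case True
  then show ?thesis
    by (simp add: segment_energy_def)
next
  case False
  define C where "C = (\<Sum>k<M. (6 / (cmod a)\<^sup>2) ^ k) / (cmod a)\<^sup>2"
  define q where "q = C / (1 + C)"
  have "0 \<le> C"
    unfolding C_def by (intro divide_nonneg_nonneg sum_nonneg) auto
  then have q: "0 \<le> q" "q < 1"
    by (auto simp: q_def)
  have geometric: "segment_energy M (w (2 * M * i)) \<le> q ^ i * segment_energy M (w 0)" for i
  proof (induction i)
    case (Suc i)
    have "segment_energy M (w (2 * M + 2 * M * i)) \<le> q * segment_energy M (w (0 + 2 * M * i))"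
      using segment_walk_energy_contraction[OF assms(1) segment_walk_shift[OF assms(3)] assms(2)] False
      unfolding q_def C_def by simp
    also have "\<dots> \<le> q ^ Suc i * segment_energy M (w 0)"
      using mult_left_mono[OF Suc.IH q(1)] by (simp add: mult.assoc)
    finally show ?case
      by simp
  qed simp
  have "\<forall>t. 0 \<le> segment_energy M (w t)"
    by (simp add: segment_energy_nonneg)
  then obtain L where L: "(\<lambda>t. segment_energy M (w t)) \<longlonglongrightarrow> L" "\<forall>t. L \<le> segment_energy M (w t)"
    using decseq_convergent[OF segment_walk_energy_decseq[OF assms(1,3)]] by blast
  have "(\<lambda>i. q ^ i * segment_energy M (w 0)) \<longlonglongrightarrow> 0"
    using q by (simp add: LIMSEQ_power_zero tendsto_mult_left_zero)
  moreover have "L \<le> q ^ i * segment_energy M (w 0)" for i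
    using L(2) geometric[of i] by (meson order_trans)
  ultimately have "L \<le> 0"
    by (intro LIMSEQ_le_const) auto
  moreover have "0 \<le> L"
    using L(1) by (intro LIMSEQ_le_const) (auto simp: segment_energy_nonneg)
  ultimately show ?thesis
    using L(1) by simp
qed

lemma segment_walk_tendsto_0:
  assumes "unitary2 a b c d" and "a \<noteq> 0" and "segment_walk M a b c d w" and "k < M"
  shows "(\<lambda>t. w t k) \<longlonglongrightarrow> 0"
proof -
  have "\<forall>t. norm (w t k) \<le> sqrt (segment_energy M (w t))"
    using sqnorm2_le_segment_energy[OF assms(4)] by (simp add: sqnorm2_eq_norm_square real_le_rsqrt)
  moreover have "(\<lambda>t. sqrt (segment_energy M (w t))) \<longlonglongrightarrow> 0"
    using tendsto_real_sqrt[OF segment_walk_energy_tendsto_0[OF assms(1-3)]] by simp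
  ultimately show ?thesis
    by (rule Lim_null_comparison[OF always_eventually])
qed

section \<open>Convergence to the stationary state\<close>

lemma unitary2_phase:
  assumes "unitary2 a b c d" and "cmod z = 1"
  shows "unitary2 (z * a) (z * b) (z * c) (z * d)"
proof -
  have "cnj z * z = 1"
    using assms(2) by (metis complex_norm_square mult.commute of_real_1 power_one)
  then have unimodular: "cnj (z * x) * (z * y) = cnj x * y" for x y
    by (metis complex_cnj_mult mult.assoc mult.left_commute mult_1)
  show ?thesis
    using assms(1) unfolding unitary2_def unimodular .
qed

lemma segment_step_diff:
  "segment_step M a b c d (\<lambda>k. u k - v k) k = segment_step M a b c d u k - segment_step M a b c d v k"
  by (simp add: segment_step_def algebra_simps)

lemma psi_t_Suc: "psi_t M a b c d \<xi> (Suc t) = U_walk M a b c d (psi_t M a b c d \<xi> t)"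
  by (simp add: psi_t_def)

lemma psi_t_outside_segment:
  shows "\<forall>j. (j < 0 \<longrightarrow> snd (psi_t M a b c d \<xi> t j) = cis (\<xi> * of_int (j - int t))) \<and>
             (int M \<le> j \<longrightarrow> fst (psi_t M a b c d \<xi> t j) = 0)"
proof (induction t)
  case 0
  show ?case
    by (simp add: psi_t_def psi0_def cis_conv_exp)
next
  case (Suc t)
  have "j < 0 \<Longrightarrow> snd (psi_t M a b c d \<xi> (Suc t) j) = snd (psi_t M a b c d \<xi> t (j - 1))"
    and "int M \<le> j \<Longrightarrow> fst (psi_t M a b c d \<xi> (Suc t) j) = fst (psi_t M a b c d \<xi> t (j + 1))" for j
    by (simp_all add: psi_t_Suc U_walk_def coin_apply_def)
  then show ?case
    using Suc.IH by (simp add: algebra_simps)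
qed

text \<open>The phase \<open>e\<^sup>i\<^sup>\<xi>\<^sup>t\<close> turns the inflow of the plane wave through site \<open>-1\<close> into the constant
  source \<open>(0, 1)\<close> at site 0.\<close>

definition rephased_walk ::
  "nat \<Rightarrow> complex \<Rightarrow> complex \<Rightarrow> complex \<Rightarrow> complex \<Rightarrow> real \<Rightarrow> nat \<Rightarrow> nat \<Rightarrow> complex \<times> complex"
  where "rephased_walk M a b c d \<xi> t k =
     (cis (\<xi> * t) * fst (psi_t M a b c d \<xi> t (int k)), cis (\<xi> * t) * snd (psi_t M a b c d \<xi> t (int k)))"

lemma sqnorm2_rephased_walk:
  "sqnorm2 (rephased_walk M a b c d \<xi> t k) = sqnorm2 (psi_t M a b c d \<xi> t (int k))"
  by (simp add: rephased_walk_def sqnorm2_def norm_mult)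

lemma rephased_walk_Suc:
  assumes "k < M"
  shows "rephased_walk M a b c d \<xi> (Suc t) k =
    segment_step M (cis \<xi> * a) (cis \<xi> * b) (cis \<xi> * c) (cis \<xi> * d) (rephased_walk M a b c d \<xi> t) k
    + (0, of_bool (k = 0))"
proof -
  let ?\<psi> = "psi_t M a b c d \<xi> t"
  define E where "E = cis (\<xi> * t)"
  have phase: "cis (\<xi> * Suc t) = cis \<xi> * E"
    by (simp add: E_def cis_mult distrib_left)
  have left: "fst (psi_t M a b c d \<xi> (Suc t) (int k)) =
      (if Suc k < M then a * fst (?\<psi> (int (Suc k))) + b * snd (?\<psi> (int (Suc k))) else 0)"
    using assms psi_t_outside_segment[of M a b c d \<xi> t]
    by (auto simp: psi_t_Suc U_walk_def coin_apply_def add.commute)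
  have "cis \<xi> * E * snd (psi_t M a b c d \<xi> (Suc t) 0) = cis (\<xi> + \<xi> * t - \<xi> * (1 + t))"
    using psi_t_outside_segment[of M a b c d \<xi> t]
    by (simp add: psi_t_Suc U_walk_def coin_apply_def E_def cis_mult algebra_simps)
  also have "\<xi> + \<xi> * t - \<xi> * (1 + t) = 0"
    by (simp add: algebra_simps)
  finally have "cis \<xi> * E * snd (psi_t M a b c d \<xi> (Suc t) 0) = 1"
    by simp
  then have right: "cis \<xi> * E * snd (psi_t M a b c d \<xi> (Suc t) (int k)) =
      (if k = 0 then 1
       else cis \<xi> * E * (c * fst (?\<psi> (int (k - 1))) + d * snd (?\<psi> (int (k - 1)))))"
    using assms by (auto simp: psi_t_Suc U_walk_def coin_apply_def of_nat_diff)
  have "snd (rephased_walk M a b c d \<xi> (Suc t) k) = cis \<xi> * E * snd (psi_t M a b c d \<xi> (Suc t) (int k))"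
    unfolding rephased_walk_def phase by simp
  also have "\<dots> = snd (segment_step M (cis \<xi> * a) (cis \<xi> * b) (cis \<xi> * c) (cis \<xi> * d)
      (rephased_walk M a b c d \<xi> t) k + (0, of_bool (k = 0)))"
    unfolding right by (simp add: segment_step_def rephased_walk_def E_def algebra_simps)
  finally show ?thesis
    unfolding prod_eq_iff rephased_walk_def phase E_def[symmetric]
    by (simp add: left segment_step_def algebra_simps)
qed

lemma rephased_walk_deviation_segment_walk:
  assumes stationary: "\<And>k. k < M \<Longrightarrow>
      v k = segment_step M (cis \<xi> * a) (cis \<xi> * b) (cis \<xi> * c) (cis \<xi> * d) v k + (0, of_bool (k = 0))"
  shows "segment_walk M (cis \<xi> * a) (cis \<xi> * b) (cis \<xi> * c) (cis \<xi> * d)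
    (\<lambda>t k. rephased_walk M a b c d \<xi> t k - v k)"
  unfolding segment_walk_def
proof (intro allI impI)
  fix t k assume "k < M"
  let ?step = "segment_step M (cis \<xi> * a) (cis \<xi> * b) (cis \<xi> * c) (cis \<xi> * d)"
  have "rephased_walk M a b c d \<xi> (Suc t) k - v k
      = (?step (rephased_walk M a b c d \<xi> t) k + (0, of_bool (k = 0))) - (?step v k + (0, of_bool (k = 0)))"
    unfolding rephased_walk_Suc[OF \<open>k < M\<close>] by (subst stationary[OF \<open>k < M\<close>]) (rule refl)
  also have "\<dots> = ?step (\<lambda>k. rephased_walk M a b c d \<xi> t k - v k) k"
    unfolding segment_step_diff by simp
  finally show "rephased_walk M a b c d \<xi> (Suc t) k - v k = ?step (\<lambda>k. rephased_walk M a b c d \<xi> t k - v k) k" .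
qed

lemma comf_ratio_tendsto_stationary:
  assumes unitary: "unitary2 a b c d" and "a \<noteq> 0" and "j < M"
    and stationary: "\<And>k. k < M \<Longrightarrow>
      v k = segment_step M (cis \<xi> * a) (cis \<xi> * b) (cis \<xi> * c) (cis \<xi> * d) v k + (0, of_bool (k = 0))"
  shows "comf_ratio M a b c d \<xi> j \<longlonglongrightarrow> sqnorm2 (v j) / (\<Sum>k<M. sqnorm2 (v k))"
proof -
  have "(\<lambda>t. sqnorm2 (psi_t M a b c d \<xi> t (int k))) \<longlonglongrightarrow> sqnorm2 (v k)" if "k < M" for k
  proof -
    have "(\<lambda>t. rephased_walk M a b c d \<xi> t k - v k) \<longlonglongrightarrow> 0"
      using unitary2_phase[OF unitary] \<open>a \<noteq> 0\<close> rephased_walk_deviation_segment_walk[OF stationary] that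
      by (intro segment_walk_tendsto_0[where w = "\<lambda>t k. rephased_walk M a b c d \<xi> t k - v k"]) simp_all
    then have "(\<lambda>t. sqnorm2 (rephased_walk M a b c d \<xi> t k)) \<longlonglongrightarrow> sqnorm2 (v k)"
      unfolding sqnorm2_eq_norm_square LIM_zero_iff by (intro tendsto_intros)
    then show ?thesis
      by (simp add: sqnorm2_rephased_walk)
  qed
  moreover have "(\<Sum>k<M. sqnorm2 (v k)) \<noteq> 0"
  proof -
    have "snd (v 0) = 1"
      using stationary[of 0] \<open>j < M\<close> by (simp add: segment_step_def)
    then have "1 \<le> sqnorm2 (v 0)"
      by (simp add: sqnorm2_def)
    also have "\<dots> \<le> (\<Sum>k<M. sqnorm2 (v k))"
      using \<open>j < M\<close> by (intro member_le_sum) (auto simp: sqnorm2_nonneg)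
    finally show ?thesis
      by simp
  qed
  ultimately show ?thesis
    unfolding comf_ratio_def using \<open>j < M\<close> by (intro tendsto_divide tendsto_sum) auto
qed

section \<open>Stationary states from the transfer matrix\<close>

text \<open>Inserting \<open>\<mu>\<^sup>k (p, 1)\<close> into the stationary equations forces \<open>p = (\<mu> - D) / C\<close> and leaves this
  quadratic equation for \<open>\<mu>\<close>.\<close>

definition transfer_char :: "complex \<Rightarrow> complex \<Rightarrow> complex \<Rightarrow> complex \<Rightarrow> complex \<Rightarrow> complex"
  where "transfer_char A B C D \<mu> = A * \<mu>\<^sup>2 - (1 + (A * D - B * C)) * \<mu> + D"

definition eigenmode :: "complex \<Rightarrow> complex \<Rightarrow> complex \<Rightarrow> nat \<Rightarrow> complex \<times> complex"
  where "eigenmode C D \<mu> k = (\<mu> ^ k * ((\<mu> - D) / C), \<mu> ^ k)"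

definition bulk_solution :: "complex \<Rightarrow> complex \<Rightarrow> complex \<Rightarrow> complex \<Rightarrow> (nat \<Rightarrow> complex \<times> complex) \<Rightarrow> bool"
  where "bulk_solution A B C D u \<longleftrightarrow> (\<forall>k.
     fst (u k) = A * fst (u (Suc k)) + B * snd (u (Suc k)) \<and>
     snd (u (Suc k)) = C * fst (u k) + D * snd (u k))"

definition lincomb :: "complex \<Rightarrow> (nat \<Rightarrow> complex \<times> complex) \<Rightarrow> complex \<Rightarrow> (nat \<Rightarrow> complex \<times> complex) \<Rightarrow> nat \<Rightarrow> complex \<times> complex"
  where "lincomb \<alpha> u \<beta> v k = (\<alpha> * fst (u k) + \<beta> * fst (v k), \<alpha> * snd (u k) + \<beta> * snd (v k))"

lemma eigenmode_bulk_solution: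
  assumes "transfer_char A B C D \<mu> = 0" and "C \<noteq> 0"
  shows "bulk_solution A B C D (eigenmode C D \<mu>)"
  unfolding bulk_solution_def
proof
  fix k
  have "\<mu> * (A * (\<mu> - D) + B * C) = \<mu> - D"
    using assms(1) by (simp add: transfer_char_def power2_eq_square algebra_simps)
  moreover have "A * (\<mu> ^ Suc k * ((\<mu> - D) / C)) + B * \<mu> ^ Suc k = \<mu> ^ k * (\<mu> * (A * (\<mu> - D) + B * C)) / C"
    using assms(2) by (simp add: field_simps)
  moreover have "\<mu> ^ Suc k = C * (\<mu> ^ k * ((\<mu> - D) / C)) + D * \<mu> ^ k"
    using assms(2) by (simp add: field_simps)
  ultimately show "fst (eigenmode C D \<mu> k) = A * fst (eigenmode C D \<mu> (Suc k)) + B * snd (eigenmode C D \<mu> (Suc k)) \<and>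
      snd (eigenmode C D \<mu> (Suc k)) = C * fst (eigenmode C D \<mu> k) + D * snd (eigenmode C D \<mu> k)"
    by (simp add: eigenmode_def)
qed

lemma bulk_solution_lincomb:
  assumes "bulk_solution A B C D u" and "bulk_solution A B C D v"
  shows "bulk_solution A B C D (lincomb \<alpha> u \<beta> v)"
  unfolding bulk_solution_def
proof
  fix k
  have u: "fst (u k) = A * fst (u (Suc k)) + B * snd (u (Suc k))" "snd (u (Suc k)) = C * fst (u k) + D * snd (u k)"
    and v: "fst (v k) = A * fst (v (Suc k)) + B * snd (v (Suc k))" "snd (v (Suc k)) = C * fst (v k) + D * snd (v k)"
    using assms unfolding bulk_solution_def by blast+
  have "fst (lincomb \<alpha> u \<beta> v k) = A * fst (lincomb \<alpha> u \<beta> v (Suc k)) + B * snd (lincomb \<alpha> u \<beta> v (Suc k))"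
    using u(1) v(1) by (simp add: lincomb_def algebra_simps)
  moreover have "snd (lincomb \<alpha> u \<beta> v (Suc k)) = C * fst (lincomb \<alpha> u \<beta> v k) + D * snd (lincomb \<alpha> u \<beta> v k)"
    using u(2) v(2) by (simp add: lincomb_def algebra_simps)
  ultimately show "fst (lincomb \<alpha> u \<beta> v k) = A * fst (lincomb \<alpha> u \<beta> v (Suc k)) + B * snd (lincomb \<alpha> u \<beta> v (Suc k)) \<and>
      snd (lincomb \<alpha> u \<beta> v (Suc k)) = C * fst (lincomb \<alpha> u \<beta> v k) + D * snd (lincomb \<alpha> u \<beta> v k)" ..
qed

lemma bulk_solution_segment_step:
  assumes "bulk_solution A B C D u" and "fst (u (M - 1)) = 0" and "k < M"
  shows "u k = segment_step M A B C D u k + (0, of_bool (k = 0) * snd (u 0))"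
proof (rule prod_eqI)
  show "fst (u k) = fst (segment_step M A B C D u k + (0, of_bool (k = 0) * snd (u 0)))"
  proof (cases "Suc k < M")
    case True
    have "fst (u k) = A * fst (u (Suc k)) + B * snd (u (Suc k))"
      using assms(1) unfolding bulk_solution_def by blast
    with True show ?thesis
      by (simp add: segment_step_def)
  next
    case False
    with assms(3) have "k = M - 1"
      by simp
    with False show ?thesis
      using assms(2) by (simp add: segment_step_def)
  qed
  show "snd (u k) = snd (segment_step M A B C D u k + (0, of_bool (k = 0) * snd (u 0)))"
  proof (cases k)
    case (Suc i)
    have "snd (u (Suc i)) = C * fst (u i) + D * snd (u i)"
      using assms(1) unfolding bulk_solution_def by blast
    then show ?thesis
      using Suc by (simp add: segment_step_def)
  qed (simp add: segment_step_def)
qed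

lemma lincomb_scale:
  "lincomb (\<kappa> * \<alpha>) u (\<kappa> * \<beta>) v k = (\<kappa> * fst (lincomb \<alpha> u \<beta> v k), \<kappa> * snd (lincomb \<alpha> u \<beta> v k))"
  by (simp add: lincomb_def algebra_simps)

lemma transfer_root_ne:
  assumes "transfer_char A B C D \<mu> = 0" and "B * C * D \<noteq> 0"
  shows "\<mu> \<noteq> D"
proof
  assume "\<mu> = D"
  then have "transfer_char A B C D \<mu> = B * C * D"
    by (simp add: transfer_char_def power2_eq_square algebra_simps)
  then have "B * C * D = 0"
    using assms(1) by metis
  with assms(2) show False
    by simp
qed

locale transfer_roots =
  fixes A B C D \<mu>\<^sub>1 \<mu>\<^sub>2 :: complex
  assumes unitary: "unitary2 A B C D"
    and nonzero: "A * B * C * D \<noteq> 0"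
    and root\<^sub>1: "transfer_char A B C D \<mu>\<^sub>1 = 0" and root\<^sub>2: "transfer_char A B C D \<mu>\<^sub>2 = 0"
    and decaying: "cmod \<mu>\<^sub>2 < 1" and growing: "1 < cmod \<mu>\<^sub>1"
begin

lemma coin_nonzero: "A \<noteq> 0" "B * C * D \<noteq> 0" "C \<noteq> 0"
  using nonzero by auto

lemma root_ne_D: "\<mu>\<^sub>1 - D \<noteq> 0" "\<mu>\<^sub>2 - D \<noteq> 0"
  using transfer_root_ne[OF root\<^sub>1 coin_nonzero(2)] transfer_root_ne[OF root\<^sub>2 coin_nonzero(2)] by simp_all

lemma roots_distinct: "\<mu>\<^sub>2 \<noteq> \<mu>\<^sub>1"
  using decaying growing by auto

text \<open>The weight of the growing mode that makes the left-moving component vanish at the last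
  site \<open>m\<close>.\<close>

definition mode_ratio :: "nat \<Rightarrow> complex"
  where "mode_ratio m = (\<mu>\<^sub>2 - D) * \<mu>\<^sub>2 ^ m / ((\<mu>\<^sub>1 - D) * \<mu>\<^sub>1 ^ m)"

definition profile :: "nat \<Rightarrow> nat \<Rightarrow> complex \<times> complex"
  where "profile m = lincomb 1 (eigenmode C D \<mu>\<^sub>2) (- mode_ratio m) (eigenmode C D \<mu>\<^sub>1)"

lemma profile_bulk_solution: "bulk_solution A B C D (profile m)"
  unfolding profile_def
  by (intro bulk_solution_lincomb eigenmode_bulk_solution root\<^sub>1 root\<^sub>2 coin_nonzero)

lemma profile_fst_last: "fst (profile m m) = 0"
proof -
  have "\<mu>\<^sub>1 \<noteq> 0"
    using growing by auto
  then have "mode_ratio m * (\<mu>\<^sub>1 ^ m * (\<mu>\<^sub>1 - D)) = \<mu>\<^sub>2 ^ m * (\<mu>\<^sub>2 - D)"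
    using root_ne_D by (simp add: mode_ratio_def field_simps)
  then show ?thesis
    by (simp add: profile_def lincomb_def eigenmode_def diff_divide_distrib[symmetric])
qed

lemma profile_snd_0: "snd (profile m 0) = 1 - mode_ratio m"
  by (simp add: profile_def lincomb_def eigenmode_def)

text \<open>Otherwise the profile would be a time-independent solution of the walk without source,
  whose energy tends to 0.\<close>

lemma mode_ratio_ne_1: "mode_ratio m \<noteq> 1"
proof
  assume ratio: "mode_ratio m = 1"
  have "profile m k = segment_step (Suc m) A B C D (profile m) k" if "k < Suc m" for k
    using bulk_solution_segment_step[OF profile_bulk_solution[of m] _ that] profile_fst_last[of m]
      profile_snd_0[of m] ratio
    by (simp add: zero_prod_def)
  then have "segment_walk (Suc m) A B C D (\<lambda>t. profile m)"
    by (simp add: segment_walk_def)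
  then have "(\<lambda>t. segment_energy (Suc m) (profile m)) \<longlonglongrightarrow> 0"
    using unitary coin_nonzero(1) by (rule segment_walk_energy_tendsto_0[rotated 2])
  then have "segment_energy (Suc m) (profile m) = 0"
    by (simp add: LIMSEQ_const_iff)
  then have "sqnorm2 (profile m 0) = 0"
    using sqnorm2_le_segment_energy[of 0 "Suc m" "profile m"] sqnorm2_nonneg[of "profile m 0"] by simp
  then have "fst (profile m 0) = 0"
    by (simp add: sqnorm2_def)
  moreover have "fst (profile m 0) = (\<mu>\<^sub>2 - \<mu>\<^sub>1) / C"
    using ratio by (simp add: profile_def lincomb_def eigenmode_def diff_divide_distrib)
  ultimately show False
    using roots_distinct coin_nonzero(3) by simp
qed

definition stationary_state :: "nat \<Rightarrow> nat \<Rightarrow> complex \<times> complex"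
  where "stationary_state m = lincomb (1 / (1 - mode_ratio m)) (eigenmode C D \<mu>\<^sub>2)
     (- mode_ratio m / (1 - mode_ratio m)) (eigenmode C D \<mu>\<^sub>1)"

lemma stationary_state_eq:
  "stationary_state m k = (fst (profile m k) / (1 - mode_ratio m), snd (profile m k) / (1 - mode_ratio m))"
  using lincomb_scale[of "1 / (1 - mode_ratio m)" 1 _ "- mode_ratio m"]
  by (simp add: stationary_state_def profile_def)

lemma stationary_state_stationary:
  assumes "k < Suc m"
  shows "stationary_state m k = segment_step (Suc m) A B C D (stationary_state m) k + (0, of_bool (k = 0))"
proof -
  have "bulk_solution A B C D (stationary_state m)"
    unfolding stationary_state_def
    by (intro bulk_solution_lincomb eigenmode_bulk_solution root\<^sub>1 root\<^sub>2 coin_nonzero)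
  moreover have "fst (stationary_state m (Suc m - 1)) = 0"
    by (simp add: stationary_state_eq profile_fst_last)
  moreover have "snd (stationary_state m 0) = 1"
    using mode_ratio_ne_1 by (simp add: stationary_state_eq profile_snd_0)
  ultimately show ?thesis
    using bulk_solution_segment_step[of A B C D "stationary_state m" "Suc m" k] assms by simp
qed

definition profile_ratio :: "nat \<Rightarrow> nat \<Rightarrow> real"
  where "profile_ratio m j = sqnorm2 (profile m j) / (\<Sum>k<Suc m. sqnorm2 (profile m k))"

lemma stationary_state_ratio:
  "sqnorm2 (stationary_state m j) / (\<Sum>k<Suc m. sqnorm2 (stationary_state m k)) = profile_ratio m j"
proof -
  have "sqnorm2 (stationary_state m k) = sqnorm2 (profile m k) / (cmod (1 - mode_ratio m))\<^sup>2" for k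
    by (simp add: stationary_state_eq sqnorm2_def norm_divide power_divide add_divide_distrib)
  moreover have "cmod (1 - mode_ratio m) \<noteq> 0"
    using mode_ratio_ne_1 by simp
  ultimately show ?thesis
    by (simp add: profile_ratio_def flip: sum_divide_distrib)
qed

end

section \<open>Letting the segment grow\<close>

lemma norm_Pair_mult: "norm (c * a, c * b) = cmod c * norm (a, b)"
  by (simp add: norm_Pair norm_mult power_mult_distrib real_sqrt_mult flip: distrib_left)

lemma norm_eigenmode: "norm (eigenmode C D \<mu> k) = cmod \<mu> ^ k * norm ((\<mu> - D) / C, 1::complex)"
  using norm_Pair_mult[of "\<mu> ^ k" "(\<mu> - D) / C" 1] by (simp add: eigenmode_def norm_power mult.commute)

lemma abs_norm_diff_square_le:
  fixes x y :: "'a::real_normed_vector"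
  shows "\<bar>(norm (x - y))\<^sup>2 - (norm x)\<^sup>2\<bar> \<le> norm y * (2 * norm x + norm y)"
proof -
  have "(norm (x - y))\<^sup>2 - (norm x)\<^sup>2 = (norm (x - y) - norm x) * (norm (x - y) + norm x)"
    by (simp add: power2_eq_square algebra_simps)
  then have "\<bar>(norm (x - y))\<^sup>2 - (norm x)\<^sup>2\<bar> = \<bar>norm (x - y) - norm x\<bar> * (norm (x - y) + norm x)"
    by (simp add: abs_mult)
  also have "\<dots> \<le> norm y * (2 * norm x + norm y)"
    using norm_triangle_ineq3[of "x - y" x] norm_triangle_ineq4[of x y]
    by (intro mult_mono) auto
  finally show ?thesis .
qed

lemma tendsto_sum_norm_square_perturbed:
  fixes x :: "nat \<Rightarrow> 'a::real_normed_vector" and y :: "nat \<Rightarrow> nat \<Rightarrow> 'a"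
  assumes sum: "(\<lambda>m. \<Sum>k<Suc m. (norm (x k))\<^sup>2) \<longlonglongrightarrow> S"
    and bounded: "\<And>k. norm (x k) \<le> B"
    and small: "\<And>m k. k \<le> m \<Longrightarrow> norm (y m k) \<le> \<epsilon> m"
    and rate: "(\<lambda>m. real (Suc m) * \<epsilon> m) \<longlonglongrightarrow> 0"
  shows "(\<lambda>m. \<Sum>k<Suc m. (norm (x k - y m k))\<^sup>2) \<longlonglongrightarrow> S"
proof -
  have \<epsilon>: "0 \<le> \<epsilon> m" for m
    using small[of m m] norm_ge_zero order_trans by blast
  have "\<epsilon> m \<le> real (Suc m) * \<epsilon> m" for m
    using \<epsilon>[of m] by (simp add: algebra_simps)
  then have "(\<lambda>m. \<epsilon> m) \<longlonglongrightarrow> 0"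
    using \<epsilon> by (intro tendsto_sandwich[OF always_eventually always_eventually tendsto_const rate]) auto
  then have "(\<lambda>m. real (Suc m) * \<epsilon> m * (2 * B + \<epsilon> m)) \<longlonglongrightarrow> 0 * (2 * B + 0)"
    by (intro tendsto_intros rate)
  moreover have "\<bar>(\<Sum>k<Suc m. (norm (x k - y m k))\<^sup>2) - (\<Sum>k<Suc m. (norm (x k))\<^sup>2)\<bar>
      \<le> real (Suc m) * \<epsilon> m * (2 * B + \<epsilon> m)" for m
  proof -
    have "\<bar>(\<Sum>k<Suc m. (norm (x k - y m k))\<^sup>2) - (\<Sum>k<Suc m. (norm (x k))\<^sup>2)\<bar>
        \<le> (\<Sum>k<Suc m. \<bar>(norm (x k - y m k))\<^sup>2 - (norm (x k))\<^sup>2\<bar>)"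
      by (simp only: sum_subtractf[symmetric] sum_abs)
    also have "\<dots> \<le> (\<Sum>k<Suc m. \<epsilon> m * (2 * B + \<epsilon> m))"
    proof (intro sum_mono)
      fix k assume "k \<in> {..<Suc m}"
      then have "norm (y m k) \<le> \<epsilon> m"
        by (intro small) simp
      then show "\<bar>(norm (x k - y m k))\<^sup>2 - (norm (x k))\<^sup>2\<bar> \<le> \<epsilon> m * (2 * B + \<epsilon> m)"
        using abs_norm_diff_square_le[of "x k" "y m k"] bounded[of k] \<epsilon>[of m]
        by (smt (verit) mult_mono norm_ge_zero)
    qed
    finally show ?thesis
      by simp
  qed
  ultimately have "(\<lambda>m. (\<Sum>k<Suc m. (norm (x k - y m k))\<^sup>2) - (\<Sum>k<Suc m. (norm (x k))\<^sup>2)) \<longlonglongrightarrow> 0"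
    using Lim_null_comparison[OF always_eventually,
        of "\<lambda>m. (\<Sum>k<Suc m. (norm (x k - y m k))\<^sup>2) - (\<Sum>k<Suc m. (norm (x k))\<^sup>2)"
          "\<lambda>m. real (Suc m) * \<epsilon> m * (2 * B + \<epsilon> m)"]
    by simp
  then show ?thesis
    using sum by (rule Lim_transform[rotated])
qed

lemma eigenmode_square_sum_tendsto:
  assumes "cmod \<mu> < 1"
  shows "(\<lambda>m. \<Sum>k<Suc m. (norm (eigenmode C D \<mu> k))\<^sup>2)
    \<longlonglongrightarrow> (norm ((\<mu> - D) / C, 1::complex))\<^sup>2 / (1 - (cmod \<mu>)\<^sup>2)"
proof -
  define r where "r = (cmod \<mu>)\<^sup>2"
  define N where "N = norm ((\<mu> - D) / C, 1::complex)"
  have square: "(norm (eigenmode C D \<mu> k))\<^sup>2 = N\<^sup>2 * r ^ k" for k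
    by (simp add: norm_eigenmode N_def r_def power_mult_distrib flip: power_mult) (simp add: mult.commute)
  have "(\<lambda>m. \<Sum>k<m. r ^ k) \<longlonglongrightarrow> 1 / (1 - r)"
    using geometric_sums[of r] assms by (simp add: r_def sums_def abs_square_less_1)
  then have "(\<lambda>m. N\<^sup>2 * (\<Sum>k<Suc m. r ^ k)) \<longlonglongrightarrow> N\<^sup>2 * (1 / (1 - r))"
    by (intro tendsto_mult_left LIMSEQ_Suc)
  then show ?thesis
    by (simp add: square N_def r_def sum_distrib_left del: sum.lessThan_Suc)
qed

lemma Suc_times_power_tendsto_0:
  fixes q :: real
  assumes "\<bar>q\<bar> < 1"
  shows "(\<lambda>m. real (Suc m) * q ^ m) \<longlonglongrightarrow> 0"
proof -
  have "(\<lambda>m. real m * q ^ m + q ^ m) \<longlonglongrightarrow> 0 + 0"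
    using assms by (intro tendsto_add powser_times_n_limit_0 LIMSEQ_power_zero) simp_all
  then show ?thesis
    by (simp add: algebra_simps)
qed

context transfer_roots
begin

definition growing_component :: "nat \<Rightarrow> nat \<Rightarrow> complex \<times> complex"
  where "growing_component m k = (mode_ratio m * fst (eigenmode C D \<mu>\<^sub>1 k), mode_ratio m * snd (eigenmode C D \<mu>\<^sub>1 k))"

lemma profile_eq: "profile m k = eigenmode C D \<mu>\<^sub>2 k - growing_component m k"
  by (simp add: profile_def lincomb_def growing_component_def prod_eq_iff)

lemma growing_component_bound:
  assumes "k \<le> m"
  shows "norm (growing_component m k)
    \<le> cmod ((\<mu>\<^sub>2 - D) / (\<mu>\<^sub>1 - D)) * norm ((\<mu>\<^sub>1 - D) / C, 1::complex) * cmod \<mu>\<^sub>2 ^ m"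
proof -
  define N where "N = norm ((\<mu>\<^sub>1 - D) / C, 1::complex)"
  have "cmod \<mu>\<^sub>1 \<noteq> 0"
    using growing by auto
  have "norm (growing_component m k) = cmod (mode_ratio m) * (cmod \<mu>\<^sub>1 ^ k * N)"
    by (simp add: growing_component_def norm_Pair_mult norm_eigenmode N_def)
  also have "\<dots> \<le> cmod (mode_ratio m) * (cmod \<mu>\<^sub>1 ^ m * N)"
    using growing assms by (intro mult_left_mono mult_right_mono power_increasing) (auto simp: N_def)
  also have "\<dots> = cmod ((\<mu>\<^sub>2 - D) / (\<mu>\<^sub>1 - D)) * N * cmod \<mu>\<^sub>2 ^ m"
    using \<open>cmod \<mu>\<^sub>1 \<noteq> 0\<close> unfolding mode_ratio_def norm_mult norm_divide norm_power
    by (simp add: field_simps)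
  finally show ?thesis
    unfolding N_def .
qed

lemma profile_sqnorm_tendsto: "(\<lambda>m. sqnorm2 (profile m j)) \<longlonglongrightarrow> (norm (eigenmode C D \<mu>\<^sub>2 j))\<^sup>2"
proof -
  define G where "G = cmod ((\<mu>\<^sub>2 - D) / (\<mu>\<^sub>1 - D)) * norm ((\<mu>\<^sub>1 - D) / C, 1::complex)"
  have "eventually (\<lambda>m. norm (growing_component m j) \<le> G * cmod \<mu>\<^sub>2 ^ m) sequentially"
    using growing_component_bound by (auto simp: G_def intro: eventually_sequentiallyI[of j])
  moreover have "(\<lambda>m. G * cmod \<mu>\<^sub>2 ^ m) \<longlonglongrightarrow> 0"
    using decaying tendsto_mult_left[OF LIMSEQ_power_zero, of "cmod \<mu>\<^sub>2" G] by simp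
  ultimately have "(\<lambda>m. growing_component m j) \<longlonglongrightarrow> 0"
    by (rule Lim_null_comparison)
  then have "(\<lambda>m. (norm (eigenmode C D \<mu>\<^sub>2 j - growing_component m j))\<^sup>2)
      \<longlonglongrightarrow> (norm (eigenmode C D \<mu>\<^sub>2 j - 0))\<^sup>2"
    by (intro tendsto_intros)
  then show ?thesis
    by (simp add: profile_eq sqnorm2_eq_norm_square)
qed

lemma profile_ratio_tendsto:
  "(\<lambda>m. profile_ratio m j) \<longlonglongrightarrow> (1 - (cmod \<mu>\<^sub>2)\<^sup>2) * ((cmod \<mu>\<^sub>2)\<^sup>2) ^ j"
proof -
  define r where "r = (cmod \<mu>\<^sub>2)\<^sup>2"
  define N where "N = norm ((\<mu>\<^sub>2 - D) / C, 1::complex)"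
  define G where "G = cmod ((\<mu>\<^sub>2 - D) / (\<mu>\<^sub>1 - D)) * norm ((\<mu>\<^sub>1 - D) / C, 1::complex)"
  have r: "0 \<le> r" "r < 1"
    using decaying by (auto simp: r_def abs_square_less_1)
  have N: "0 < N"
    by (simp add: N_def zero_prod_def)
  have bounded: "norm (eigenmode C D \<mu>\<^sub>2 k) \<le> N" for k
    using decaying N by (simp add: norm_eigenmode N_def power_le_one mult_left_le_one_le)
  have rate: "(\<lambda>m. real (Suc m) * (G * cmod \<mu>\<^sub>2 ^ m)) \<longlonglongrightarrow> 0"
    using tendsto_mult_left[OF Suc_times_power_tendsto_0, of "cmod \<mu>\<^sub>2" G] decaying
    by (simp add: mult.left_commute)
  have "(\<lambda>m. \<Sum>k<Suc m. sqnorm2 (profile m k)) \<longlonglongrightarrow> N\<^sup>2 / (1 - r)"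
    unfolding profile_eq sqnorm2_eq_norm_square r_def N_def
    by (rule tendsto_sum_norm_square_perturbed[OF eigenmode_square_sum_tendsto[OF decaying]
          bounded[unfolded N_def] growing_component_bound rate[unfolded G_def]])
  moreover have "(norm (eigenmode C D \<mu>\<^sub>2 j))\<^sup>2 = N\<^sup>2 * r ^ j"
    by (simp add: norm_eigenmode N_def r_def power_mult_distrib flip: power_mult) (simp add: mult.commute)
  ultimately have "(\<lambda>m. profile_ratio m j) \<longlonglongrightarrow> (N\<^sup>2 * r ^ j) / (N\<^sup>2 / (1 - r))"
    unfolding profile_ratio_def using profile_sqnorm_tendsto[of j] N r by (intro tendsto_divide) simp_all
  also have "(N\<^sup>2 * r ^ j) / (N\<^sup>2 / (1 - r)) = (1 - r) * r ^ j"
    using N r by (simp add: field_simps)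
  finally show ?thesis
    unfolding r_def .
qed

end

section \<open>The roots for the coin \<open>e\<^sup>i\<^sup>\<xi> C\<^sub>0\<close>\<close>

text \<open>The rephased coin \<open>(A, B, C, D) = e\<^sup>i\<^sup>\<xi> (a, b, c, d)\<close> has determinant \<open>z\<^sup>2\<close> and \<open>A D = z\<^sup>2 |a|\<^sup>2\<close>
  with \<open>z = e\<^sup>i\<^sup>\<omega>\<close>, so substituting \<open>\<mu> = z |a| x / A\<close> turns the characteristic polynomial into a
  multiple of \<open>x\<^sup>2 - 2 (cos \<omega> / |a|) x + 1\<close>.\<close>

lemma transfer_char_rotated_root:
  fixes x :: real
  assumes unitary: "unitary2 a b c d" and "a \<noteq> 0" and \<omega>: "\<omega> = Arg (a * d - b * c) / 2 + \<xi>"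
    and root: "x\<^sup>2 - 2 * (cos \<omega> / cmod a) * x + 1 = 0"
  shows "transfer_char (cis \<xi> * a) (cis \<xi> * b) (cis \<xi> * c) (cis \<xi> * d) (cis \<omega> * cmod a / (cis \<xi> * a) * x) = 0"
proof -
  define \<Delta> where "\<Delta> = a * d - b * c"
  define z where "z = cis \<omega>"
  have "\<Delta> \<noteq> 0"
    using unitary2_norm_det[OF unitary] by (auto simp: \<Delta>_def)
  then have "cis (Arg \<Delta>) = \<Delta>"
    using unitary2_norm_det[OF unitary] by (simp add: cis_Arg sgn_div_norm \<Delta>_def)
  moreover have "z * z = cis (Arg \<Delta>) * (cis \<xi> * cis \<xi>)"
    unfolding z_def cis_mult \<omega> \<Delta>_def by (simp add: algebra_simps)
  ultimately have zz: "z * z = cis \<xi> * cis \<xi> * \<Delta>"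
    by simp
  have det: "cis \<xi> * a * (cis \<xi> * d) - cis \<xi> * b * (cis \<xi> * c) = z * z"
    by (simp add: zz \<Delta>_def algebra_simps)
  have "a * cnj a = (complex_of_real (cmod a))\<^sup>2"
    using complex_norm_square[of a] by simp
  moreover have "d = \<Delta> * cnj a"
    using unitary2_cofactors(1)[OF unitary] by (simp only: \<Delta>_def)
  ultimately have "a * d = \<Delta> * (cmod a)\<^sup>2"
    by (simp add: ac_simps)
  then have D: "cis \<xi> * d = z * z * (cmod a)\<^sup>2 / (cis \<xi> * a)"
    using \<open>a \<noteq> 0\<close> by (simp add: zz field_simps)
  have trace: "1 + z * z = z * (2 * cos \<omega>)"
    by (simp add: z_def complex_eq_iff cos_double sin_double power2_eq_square algebra_simps)
  have "transfer_char (cis \<xi> * a) (cis \<xi> * b) (cis \<xi> * c) (cis \<xi> * d) (z * cmod a / (cis \<xi> * a) * x)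
      = z * z * cmod a / (cis \<xi> * a) * of_real (cmod a * x\<^sup>2 - 2 * cos \<omega> * x + cmod a)"
    using \<open>a \<noteq> 0\<close> unfolding transfer_char_def det trace unfolding D
    by (simp add: field_simps power2_eq_square)
  also have "cmod a * x\<^sup>2 - 2 * cos \<omega> * x + cmod a = 0"
    using root \<open>a \<noteq> 0\<close> by (simp add: field_simps)
  finally show ?thesis
    by (simp add: z_def)
qed

lemma transfer_roots_from_real_quadratic:
  assumes "unitary2 a b c d" and "a * b * c * d \<noteq> 0" and "\<omega> = Arg (a * d - b * c) / 2 + \<xi>"
    and "lam\<^sup>2 - 2 * (cos \<omega> / cmod a) * lam + 1 = 0" and "\<bar>lam\<bar> > 1"
    and "s = cis \<omega> * cmod a / (cis \<xi> * a)"
  shows "transfer_roots (cis \<xi> * a) (cis \<xi> * b) (cis \<xi> * c) (cis \<xi> * d) (s * lam) (s * (1 / lam))"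
proof -
  have "a \<noteq> 0"
    using assms(2) by auto
  then have "cmod s = 1"
    by (simp add: assms(6) norm_mult norm_divide)
  have root: "transfer_char (cis \<xi> * a) (cis \<xi> * b) (cis \<xi> * c) (cis \<xi> * d) (s * x) = 0"
    if "x\<^sup>2 - 2 * (cos \<omega> / cmod a) * x + 1 = 0" for x :: real
    using transfer_char_rotated_root[OF assms(1) \<open>a \<noteq> 0\<close> assms(3) that] by (simp add: assms(6))
  have "(1 / lam)\<^sup>2 - 2 * (cos \<omega> / cmod a) * (1 / lam) + 1 = 0"
    using assms(4,5) by (simp add: field_simps power2_eq_square)
  from root[OF assms(4)] root[OF this] show ?thesis
    using assms(1,2,5) \<open>cmod s = 1\<close>
    by unfold_locales (simp_all add: unitary2_phase norm_mult norm_divide)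
qed

theorem theorem3p2:
  fixes a b c d :: complex and \<xi> \<omega> lam :: real
  assumes "unitary2 a b c d"
    and "a * b * c * d \<noteq> 0"
    and "\<omega> = Arg (a * d - b * c) / 2 + \<xi>"
    and "\<bar>cos \<omega>\<bar> > cmod a"
    and "lam\<^sup>2 - 2 * (cos \<omega> / cmod a) * lam + 1 = 0"
    and "\<bar>lam\<bar> > 1"
  shows "\<forall>j::nat. \<exists>\<mu>::nat \<Rightarrow> real.
           (\<forall>M. j < M \<longrightarrow> (comf_ratio M a b c d \<xi> j \<longlonglongrightarrow> \<mu> M)) \<and>
           (\<mu> \<longlonglongrightarrow> (1 - lam powi (-2)) * lam powi (-2 * int j))"
proof
  fix j
  define s where "s = cis \<omega> * cmod a / (cis \<xi> * a)"
  have "a \<noteq> 0" and "cmod s = 1"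
    using assms(2) by (auto simp: s_def norm_mult norm_divide)
  interpret transfer_roots "cis \<xi> * a" "cis \<xi> * b" "cis \<xi> * c" "cis \<xi> * d" "s * lam" "s * (1 / lam)"
    using transfer_roots_from_real_quadratic[OF assms(1-3,5,6) s_def] .
  have "(cmod (s * (1 / lam)))\<^sup>2 = lam powi (-2)"
    using \<open>cmod s = 1\<close> by (simp add: norm_mult norm_divide power_int_minus power2_abs power_divide inverse_eq_divide)
  moreover have "lam powi (-2 * int j) = (lam powi (-2)) ^ j"
    by (simp only: power_int_mult power_int_of_nat)
  ultimately have limit: "(\<lambda>m. profile_ratio m j) \<longlonglongrightarrow> (1 - lam powi (-2)) * lam powi (-2 * int j)"
    using profile_ratio_tendsto[of j] by simp
  have "comf_ratio M a b c d \<xi> j \<longlonglongrightarrow> profile_ratio (M - 1) j" if "j < M" for M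
  proof -
    from that obtain m where M: "M = Suc m"
      by (cases M) auto
    with that show ?thesis
      using comf_ratio_tendsto_stationary[OF assms(1) \<open>a \<noteq> 0\<close> _ stationary_state_stationary]
      unfolding stationary_state_ratio by simp
  qed
  moreover have "(\<lambda>M. profile_ratio (M - 1) j) \<longlonglongrightarrow> (1 - lam powi (-2)) * lam powi (-2 * int j)"
    by (rule LIMSEQ_imp_Suc) (simp only: diff_Suc_1 limit)
  ultimately show "\<exists>\<mu>. (\<forall>M. j < M \<longrightarrow> comf_ratio M a b c d \<xi> j \<longlonglongrightarrow> \<mu> M) \<and>
      \<mu> \<longlonglongrightarrow> (1 - lam powi (-2)) * lam powi (-2 * int j)"
    by (intro exI[of _ "\<lambda>M. profile_ratio (M - 1) j"] conjI allI impI)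
qed

end
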